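(* For all $n\ge 0$, the quadruples of statistics $(\operatorname{asc},\operatorname{des},\operatorname{MNA},\operatorname{MND})$ and $(\operatorname{des},\operatorname{asc},\operatorname{MND},\operatorname{MNA})$ are equidistributed on $S_n(213,231)$, i.e. $$\sum_{\pi\in S_n(213,231)} t_1^{\operatorname{asc}(\pi)}t_2^{\operatorname{des}(\pi)}t_3^{\operatorname{MNA}(\pi)}t_4^{\operatorname{MND}(\pi)}=\sum_{\pi\in S_n(213,231)} t_1^{\operatorname{des}(\pi)}t_2^{\operatorname{asc}(\pi)}t_3^{\operatorname{MND}(\pi)}t_4^{\operatorname{MNA}(\pi)}.$$
   Context: For $n\ge 0$, $S_n$ denotes the set of permutations $\pi=\pi_1\cdots\pi_n$ of $[n]=\{1,\dots,n\}$. $\pi$ avoids a pattern $\tau\in S_k$ if no subsequence $\pi_{i_1}\cdots\pi_{i_k}$ ($i_1<\dots<i_k$) satisfies $\pi_{i_a}<\pi_{i_b}\iff\tau_a<\tau_b$; $S_n(\tau,\rho)$ is the set of permutations in $S_n$ avoiding both $\tau$ and $\rho$. $\operatorname{asc}(\pi)$ (resp. $\operatorname{des}(\pi)$) is the number of $i\in[n-1]$ with $\pi_i<\pi_{i+1}$ (resp. $\pi_i>\pi_{i+1}$). $\operatorname{MNA}(\pi)$ is the maximum size of a set $I\subseteq[n-1]$ such that $\pi_i<\pi_{i+1}$ for all $i\in I$ and $|i-j|\ge 2$ for distinct $i,j\in I$; $\operatorname{MND}(\pi)$ is defined analogously with $\pi_i>\pi_{i+1}$. *)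

theory Defs
  imports "HOL-Combinatorics.Multiset_Permutations"
begin

(* Permutations of [n] are lists; pi_i (1-based) is xs ! (i - 1). *)

definition Sn :: "nat \<Rightarrow> nat list set" where
  "Sn n = permutations_of_set {1..n}"

definition contains :: "nat list \<Rightarrow> nat list \<Rightarrow> bool" where
  "contains xs tau \<longleftrightarrow>
     (\<exists>idx :: nat \<Rightarrow> nat. strict_mono_on {0..<length tau} idx \<and>
        (\<forall>a<length tau. idx a < length xs) \<and>
        (\<forall>a<length tau. \<forall>b<length tau.
            (xs ! idx a < xs ! idx b) \<longleftrightarrow> (tau ! a < tau ! b)))"

definition avoids :: "nat list \<Rightarrow> nat list \<Rightarrow> bool" where
  "avoids xs tau \<longleftrightarrow> \<not> contains xs tau"

definition Sn2 :: "nat \<Rightarrow> nat list \<Rightarrow> nat list \<Rightarrow> nat list set" where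
  "Sn2 n tau rho = {xs \<in> Sn n. avoids xs tau \<and> avoids xs rho}"

definition asc_set :: "nat list \<Rightarrow> nat set" where
  "asc_set xs = {i \<in> {1..length xs - 1}. xs ! (i - 1) < xs ! i}"

definition des_set :: "nat list \<Rightarrow> nat set" where
  "des_set xs = {i \<in> {1..length xs - 1}. xs ! (i - 1) > xs ! i}"

definition asc :: "nat list \<Rightarrow> nat" where
  "asc xs = card (asc_set xs)"

definition des :: "nat list \<Rightarrow> nat" where
  "des xs = card (des_set xs)"

definition nonadjacent :: "nat set \<Rightarrow> bool" where
  "nonadjacent I \<longleftrightarrow> (\<forall>i\<in>I. \<forall>j\<in>I. i \<noteq> j \<longrightarrow> 2 \<le> (if i \<le> j then j - i else i - j))"

definition MNA :: "nat list \<Rightarrow> nat" where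
  "MNA xs = Max (card ` {I. I \<subseteq> asc_set xs \<and> nonadjacent I})"

definition MND :: "nat list \<Rightarrow> nat" where
  "MND xs = Max (card ` {I. I \<subseteq> des_set xs \<and> nonadjacent I})"

end

theory Submission
  imports Defs
begin

(* The complement map pi_i \<mapsto> n + 1 - pi_i reverses all comparisons. Hence it swaps
   ascents with descents (so asc with des and MNA with MND), and it sends an occurrence of a
   pattern to an occurrence of the complementary pattern; as the complement of 213 is 231, it
   is an involution of S_n(213,231) exchanging the two quadruples of statistics. *)

definition complement :: "nat \<Rightarrow> nat list \<Rightarrow> nat list" where
  "complement n xs = map (\<lambda>x. Suc n - x) xs"

lemma length_complement [simp]: "length (complement n xs) = length xs"
  by (simp add: complement_def)

lemma complement_less_iff:
  assumes "\<forall>x\<in>set xs. x \<le> n" "i < length xs" "j < length xs"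
  shows "complement n xs ! i < complement n xs ! j \<longleftrightarrow> xs ! j < xs ! i"
proof -
  have "xs ! i \<le> n" "xs ! j \<le> n" using assms by auto
  then show ?thesis using assms(2,3) by (simp add: complement_def) linarith
qed

lemma contains_complement:
  assumes "\<forall>x\<in>set xs. x \<le> n" "\<forall>t\<in>set tau. t \<le> k"
  shows "contains (complement n xs) tau \<longleftrightarrow> contains xs (complement k tau)"
proof -
  have "(\<forall>a<length tau. \<forall>b<length tau.
            (complement n xs ! idx a < complement n xs ! idx b) \<longleftrightarrow> (tau ! a < tau ! b))
    \<longleftrightarrow> (\<forall>a<length tau. \<forall>b<length tau.
            (xs ! idx a < xs ! idx b) \<longleftrightarrow> (complement k tau ! a < complement k tau ! b))"
    if "\<forall>a<length tau. idx a < length xs" for idx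
    \<comment> \<open>both sides reverse one comparison; they agree after exchanging a and b\<close>
    using that complement_less_iff[OF assms(1)] complement_less_iff[OF assms(2)] by metis
  then show ?thesis
    unfolding contains_def length_complement by blast
qed

lemma asc_set_complement:
  assumes "\<forall>x\<in>set xs. x \<le> n"
  shows "asc_set (complement n xs) = des_set xs"
  using complement_less_iff[OF assms, of "i - 1" i for i]
  by (auto simp: asc_set_def des_set_def)

lemma des_set_complement:
  assumes "\<forall>x\<in>set xs. x \<le> n"
  shows "des_set (complement n xs) = asc_set xs"
  using complement_less_iff[OF assms, of i "i - 1" for i]
  by (auto simp: asc_set_def des_set_def)

lemma Sn_le: "xs \<in> Sn n \<Longrightarrow> \<forall>x\<in>set xs. x \<le> n"
  by (auto simp: Sn_def permutations_of_set_def)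

lemma complement_complement:
  "\<forall>x\<in>set xs. x \<le> n \<Longrightarrow> complement n (complement n xs) = xs"
  by (auto simp: complement_def intro!: map_idI)

lemma complement_in_Sn:
  assumes "xs \<in> Sn n"
  shows "complement n xs \<in> Sn n"
proof -
  have set: "set xs = {1..n}" and "distinct xs"
    using assms by (auto simp: Sn_def permutations_of_set_def)
  have "bij_betw (\<lambda>x. Suc n - x) {1..n} {1..n}"
    by (rule bij_betw_byWitness[where f' = "\<lambda>x. Suc n - x"]) auto
  then show ?thesis
    using set \<open>distinct xs\<close>
    by (auto simp: Sn_def permutations_of_set_def complement_def distinct_map bij_betw_def)
qed

lemma Sn2_commute: "Sn2 n tau rho = Sn2 n rho tau"
  by (auto simp: Sn2_def)

lemma complement_in_Sn2:
  assumes "xs \<in> Sn2 n tau rho" "set tau \<subseteq> {1..k}" "set rho \<subseteq> {1..k}"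
  shows "complement n xs \<in> Sn2 n (complement k tau) (complement k rho)"
proof -
  have xs: "xs \<in> Sn n" "avoids xs tau" "avoids xs rho"
    using assms(1) by (auto simp: Sn2_def)
  have "avoids (complement n xs) (complement k \<sigma>) \<longleftrightarrow> avoids xs \<sigma>"
    if "set \<sigma> \<subseteq> {1..k}" for \<sigma>
  proof -
    have "\<forall>t\<in>set (complement k \<sigma>). t \<le> k" "\<forall>t\<in>set \<sigma>. t \<le> k"
      using that by (fastforce simp: complement_def)+
    then show ?thesis
      using contains_complement[OF Sn_le[OF xs(1)]] complement_complement
      by (simp add: avoids_def)
  qed
  then show ?thesis
    using xs assms(2,3) complement_in_Sn by (simp add: Sn2_def)
qed

lemma
  assumes "\<forall>x\<in>set xs. x \<le> n"
  shows asc_complement: "asc (complement n xs) = des xs"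
    and des_complement: "des (complement n xs) = asc xs"
    and MNA_complement: "MNA (complement n xs) = MND xs"
    and MND_complement: "MND (complement n xs) = MNA xs"
  using asc_set_complement[OF assms] des_set_complement[OF assms]
  by (simp_all add: asc_def des_def MNA_def MND_def)

lemma Sn2_le: "xs \<in> Sn2 n tau rho \<Longrightarrow> \<forall>x\<in>set xs. x \<le> n"
  by (auto simp: Sn2_def dest: Sn_le)

lemma complement_in_Sn2_213_231:
  assumes "\<pi> \<in> Sn2 n [2,1,3] [2,3,1]"
  shows "complement n \<pi> \<in> Sn2 n [2,1,3] [2,3,1]"
proof -
  have "complement 3 [2,1,3] = [2,3,1]" "complement 3 [2,3,1] = [2,1,3]"
    by (simp_all add: complement_def)
  then show ?thesis
    using complement_in_Sn2[OF assms, of 3] by (simp add: Sn2_commute)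
qed

theorem theorem13:
  fixes n :: nat and t1 t2 t3 t4 :: "'a :: comm_semiring_1"
  shows "(\<Sum>\<pi>\<in>Sn2 n [2,1,3] [2,3,1].
            t1 ^ asc \<pi> * t2 ^ des \<pi> * t3 ^ MNA \<pi> * t4 ^ MND \<pi>)
       = (\<Sum>\<pi>\<in>Sn2 n [2,1,3] [2,3,1].
            t1 ^ des \<pi> * t2 ^ asc \<pi> * t3 ^ MND \<pi> * t4 ^ MNA \<pi>)"
  by (rule sum.reindex_bij_witness[where i = "complement n" and j = "complement n"])
    (auto simp: complement_in_Sn2_213_231[simplified] complement_complement Sn2_le
      asc_complement des_complement MNA_complement MND_complement)

end
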